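(* Let $N$ be a natural number, and let $\mathcal{T}_N$ be the class of all finite reflexive graphs $G$ whose vertex set can be written as a disjoint union $G_e\cup G_c\cup G_f$ such that: the graph induced on $G_e$ is empty; the graph induced on $G_c$ is complete; $|G_f|\le N$; and the connections between $G_e$ and $G_c$ are uniform, i.e. for all $x,y\in G_e$ and all $z,t\in G_c$, $x$ is adjacent to $z$ if and only if $y$ is adjacent to $t$. Then $\mathcal{T}_N$ is well quasi-ordered under both the standard and the strong homomorphic image orderings.
   Context: A graph is a digraph (set with binary relation $E$) whose edge relation is symmetric; a reflexive graph has a loop at every vertex. Empty means no edges between distinct vertices; complete means all pairs of distinct vertices are adjacent. A homomorphism maps edges to edges (in reflexive graphs, an edge or a non-edge may be collapsed to a single vertex); it is strong if additionally every edge of the target among vertices of the image is the image of an edge. Standard homomorphic image ordering: $A\preceq B$ iff there is a surjective homomorphism $B\to A$; strong: iff there is a surjective strong homomorphism $B\to A$. Well quasi-ordered means no infinite strictly decreasing sequence and no infinite antichain; structures considered up to isomorphism. *)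

theory Defs
  imports Main
begin

text \<open>A graph is a pair (V, E): a vertex set V and a binary relation E; only the
  values of E on V matter. Finite graphs can be taken, up to isomorphism, on
  natural-number vertices.\<close>

type_synonym graph = "nat set \<times> (nat \<Rightarrow> nat \<Rightarrow> bool)"

definition verts :: "graph \<Rightarrow> nat set" where "verts G = fst G"
definition adj :: "graph \<Rightarrow> nat \<Rightarrow> nat \<Rightarrow> bool" where "adj G = snd G"

definition finite_refl_graph :: "graph \<Rightarrow> bool" where
  "finite_refl_graph G \<longleftrightarrow> finite (verts G)
     \<and> (\<forall>x\<in>verts G. \<forall>y\<in>verts G. adj G x y \<longrightarrow> adj G y x)
     \<and> (\<forall>x\<in>verts G. adj G x x)"

definition hom :: "(nat \<Rightarrow> nat) \<Rightarrow> graph \<Rightarrow> graph \<Rightarrow> bool" where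
  "hom f G H \<longleftrightarrow> (\<forall>x\<in>verts G. f x \<in> verts H)
     \<and> (\<forall>x\<in>verts G. \<forall>y\<in>verts G. adj G x y \<longrightarrow> adj H (f x) (f y))"

definition strong_hom :: "(nat \<Rightarrow> nat) \<Rightarrow> graph \<Rightarrow> graph \<Rightarrow> bool" where
  "strong_hom f G H \<longleftrightarrow> hom f G H
     \<and> (\<forall>u\<in>f ` verts G. \<forall>v\<in>f ` verts G. adj H u v \<longrightarrow>
          (\<exists>x\<in>verts G. \<exists>y\<in>verts G. f x = u \<and> f y = v \<and> adj G x y))"

definition hom_image_le :: "graph \<Rightarrow> graph \<Rightarrow> bool" where
  "hom_image_le A B \<longleftrightarrow> (\<exists>f. hom f B A \<and> f ` verts B = verts A)"

definition strong_hom_image_le :: "graph \<Rightarrow> graph \<Rightarrow> bool" where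
  "strong_hom_image_le A B \<longleftrightarrow> (\<exists>f. strong_hom f B A \<and> f ` verts B = verts A)"

definition well_quasi_ordered_on :: "('b \<Rightarrow> 'b \<Rightarrow> bool) \<Rightarrow> 'b set \<Rightarrow> bool" where
  "well_quasi_ordered_on le S \<longleftrightarrow>
     (\<not> (\<exists>g::nat \<Rightarrow> 'b. (\<forall>i. g i \<in> S) \<and> (\<forall>i. le (g (Suc i)) (g i) \<and> \<not> le (g i) (g (Suc i)))))
   \<and> (\<not> (\<exists>g::nat \<Rightarrow> 'b. (\<forall>i. g i \<in> S) \<and> (\<forall>i j::nat. i \<noteq> j \<longrightarrow> \<not> le (g i) (g j))))"

definition T_class :: "nat \<Rightarrow> graph set" where
  "T_class N = {G. finite_refl_graph G \<and>
     (\<exists>Ge Gc Gf. verts G = Ge \<union> Gc \<union> Gf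
        \<and> Ge \<inter> Gc = {} \<and> Ge \<inter> Gf = {} \<and> Gc \<inter> Gf = {}
        \<and> (\<forall>x\<in>Ge. \<forall>y\<in>Ge. x \<noteq> y \<longrightarrow> \<not> adj G x y)
        \<and> (\<forall>x\<in>Gc. \<forall>y\<in>Gc. x \<noteq> y \<longrightarrow> adj G x y)
        \<and> card Gf \<le> N
        \<and> (\<forall>x\<in>Ge. \<forall>y\<in>Ge. \<forall>z\<in>Gc. \<forall>t\<in>Gc. adj G x z \<longleftrightarrow> adj G y t))}"

end

theory Submission
  imports Defs "HOL-Library.Infinite_Set"
begin

(* Every graph in T_N admits a labelling by a finite alphabet depending only on N -- a vertex
   of G_f by its index, a vertex of G_e or G_c by its side and its neighbourhood in G_f -- such
   that adjacency of distinct vertices is a relation between their labels.  If two graphs carry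
   the same set of labels and the same label relation, and the second has at least as many
   vertices of every label, then mapping each label class onto the corresponding one is a
   surjective strong homomorphism (collapsed vertices are absorbed by the loops).  Dickson's
   lemma on the label counts therefore excludes infinite antichains.

   Strictly descending chains do not exist among any finite graphs: a surjective homomorphism
   that is not inverted by a strong one either loses vertices or, being bijective, gains edges,
   so (number of vertices, number of non-edges) decreases lexicographically. *)

lemma infinite_subset_mono:
  fixes h :: "nat \<Rightarrow> 'b::wellorder"
  assumes "infinite I"
  shows "\<exists>J\<subseteq>I. infinite J \<and> (\<forall>i\<in>J. \<forall>j\<in>J. i < j \<longrightarrow> h i \<le> h j)"
proof -
  \<comment> \<open>A minimiser of h on the part of I beyond n lies in J, so J is unbounded.\<close>
  define J where "J = {i\<in>I. \<forall>j\<in>I. i < j \<longrightarrow> h i \<le> h j}"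
  have "\<exists>i\<in>J. n \<le> i" for n
  proof -
    define S where "S = {i\<in>I. n \<le> i}"
    have "S \<noteq> {}" using assms unfolding S_def infinite_nat_iff_unbounded_le by blast
    then obtain i where i: "i \<in> S" "h i = (LEAST v. v \<in> h ` S)"
      by (metis (mono_tags, lifting) LeastI empty_is_image ex_in_conv imageE)
    have "h i \<le> h j" if "j \<in> I" "i < j" for j
      using that i by (auto simp: S_def intro: Least_le)
    with i show ?thesis by (auto simp: J_def S_def)
  qed
  then have "infinite J" by (auto simp: infinite_nat_iff_unbounded_le)
  moreover have "J \<subseteq> I" by (simp add: J_def)
  ultimately show ?thesis unfolding J_def by blast
qed

lemma infinite_subset_mono_coords:
  fixes c :: "nat \<Rightarrow> 'l \<Rightarrow> 'b::wellorder"
  assumes "finite \<Lambda>" and "infinite I"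
  shows "\<exists>J\<subseteq>I. infinite J \<and> (\<forall>i\<in>J. \<forall>j\<in>J. i < j \<longrightarrow> (\<forall>l\<in>\<Lambda>. c i l \<le> c j l))"
  using assms
proof (induction \<Lambda> arbitrary: I rule: finite_induct)
  case empty
  then show ?case by blast
next
  case (insert l \<Lambda>)
  obtain J where J: "J \<subseteq> I" "infinite J" "\<forall>i\<in>J. \<forall>j\<in>J. i < j \<longrightarrow> (\<forall>l\<in>\<Lambda>. c i l \<le> c j l)"
    using insert.IH[OF insert.prems] by blast
  obtain K where "K \<subseteq> J" "infinite K" "\<forall>i\<in>K. \<forall>j\<in>K. i < j \<longrightarrow> c i l \<le> c j l"
    using infinite_subset_mono[OF J(2), of "\<lambda>i. c i l"] by blast
  with J show ?case by (intro exI[of _ K]) blast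
qed

lemma dickson_good_pair:
  fixes c :: "nat \<Rightarrow> 'l \<Rightarrow> 'b::wellorder"
  assumes "finite \<Lambda>" and "finite (range D)"
  shows "\<exists>i j. i < j \<and> D i = D j \<and> (\<forall>l\<in>\<Lambda>. c i l \<le> c j l)"
proof -
  obtain d where "infinite (D -` {d})"
    using inf_img_fin_dom'[OF assms(2) infinite_UNIV_nat] by auto
  from infinite_subset_mono_coords[OF assms(1) this, of c]
  obtain J where J: "J \<subseteq> D -` {d}" "infinite J"
      "\<forall>i\<in>J. \<forall>j\<in>J. i < j \<longrightarrow> (\<forall>l\<in>\<Lambda>. c i l \<le> c j l)"
    by blast
  obtain i where "i \<in> J"
    using J(2) by (metis finite.emptyI ex_in_conv)
  moreover obtain j where "j \<in> J" "i < j"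
    using J(2) by (meson infinite_nat_iff_unbounded)
  ultimately have "D i = D j" "\<forall>l\<in>\<Lambda>. c i l \<le> c j l"
    using J by (auto simp: subset_iff)
  with \<open>i < j\<close> show ?thesis by blast
qed

lemma finite_refl_graphD:
  assumes "finite_refl_graph G"
  shows "finite (verts G)"
    and "\<And>x y. x \<in> verts G \<Longrightarrow> y \<in> verts G \<Longrightarrow> adj G x y \<Longrightarrow> adj G y x"
    and "\<And>x. x \<in> verts G \<Longrightarrow> adj G x x"
  using assms unfolding finite_refl_graph_def by blast+

definition edges :: "graph \<Rightarrow> (nat \<times> nat) set" where
  "edges G = {(x, y). x \<in> verts G \<and> y \<in> verts G \<and> adj G x y}"

lemma edges_subset: "edges G \<subseteq> verts G \<times> verts G"
  by (auto simp: edges_def)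

lemma finite_edges: "finite (verts G) \<Longrightarrow> finite (edges G)"
  by (rule finite_subset[OF edges_subset]) simp

lemma card_edges_le: "finite (verts G) \<Longrightarrow> card (edges G) \<le> card (verts G) ^ 2"
  by (metis edges_subset card_cartesian_product card_mono finite_cartesian_product power2_eq_square)

lemma strong_hom_image_le_imp_hom_image_le: "strong_hom_image_le A B \<Longrightarrow> hom_image_le A B"
  unfolding strong_hom_image_le_def hom_image_le_def strong_hom_def by blast

lemma hom_reflects_adj_if_card_edges_le:
  assumes f: "hom f B A" and inj: "inj_on f (verts B)" and fin: "finite (verts A)"
    and card: "card (edges A) \<le> card (edges B)"
    and x: "x \<in> verts B" and y: "y \<in> verts B" and xy: "adj A (f x) (f y)"
  shows "adj B x y"
proof -
  have sub: "map_prod f f ` edges B \<subseteq> edges A"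
    using f by (auto simp: edges_def hom_def)
  have "inj_on (map_prod f f) (edges B)"
    using inj by (auto simp: edges_def inj_on_def)
  then have "card (edges A) \<le> card (map_prod f f ` edges B)"
    using card by (simp add: card_image)
  then have "map_prod f f ` edges B = edges A"
    by (rule card_seteq[OF finite_edges[OF fin] sub])
  moreover have "(f x, f y) \<in> edges A"
    using f x y xy by (auto simp: edges_def hom_def)
  ultimately have "(f x, f y) \<in> map_prod f f ` edges B"
    by simp
  then obtain x' y' where "(x', y') \<in> edges B" "f x' = f x" "f y' = f y"
    by auto
  with inj x y show ?thesis
    by (auto simp: edges_def inj_on_def)
qed

lemma strong_hom_image_le_inverse:
  assumes bij: "bij_betw f (verts B) (verts A)" and f: "hom f B A"
    and reflects: "\<And>x y. x \<in> verts B \<Longrightarrow> y \<in> verts B \<Longrightarrow> adj A (f x) (f y) \<Longrightarrow> adj B x y"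
  shows "strong_hom_image_le B A"
proof -
  define g where "g = inv_into (verts B) f"
  have g: "bij_betw g (verts A) (verts B)"
    using bij by (simp add: g_def bij_betw_inv_into)
  have gf: "g (f x) = x" if "x \<in> verts B" for x
    using bij that by (simp add: g_def bij_betw_def)
  have fg: "f (g u) = u" if "u \<in> verts A" for u
    using bij that by (simp add: g_def bij_betw_def f_inv_into_f)
  have "hom g A B"
    unfolding hom_def
  proof (intro conjI ballI impI)
    fix u assume "u \<in> verts A"
    then show "g u \<in> verts B" using g by (auto simp: bij_betw_def)
  next
    fix u v assume "u \<in> verts A" "v \<in> verts A" "adj A u v"
    then show "adj B (g u) (g v)"
      using g reflects fg by (metis bij_betw_apply)
  qed
  moreover have "\<exists>u\<in>verts A. \<exists>v\<in>verts A. g u = x \<and> g v = y \<and> adj A u v"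
    if "x \<in> verts B" "y \<in> verts B" "adj B x y" for x y
    using that f gf by (intro bexI[of _ "f x"] bexI[of _ "f y"]) (auto simp: hom_def)
  ultimately have "strong_hom g A B"
    using g by (auto simp: strong_hom_def bij_betw_def)
  then show ?thesis
    using g by (auto simp: strong_hom_image_le_def bij_betw_def)
qed

lemma hom_image_le_strict_decrease:
  assumes "hom_image_le A B" and fin: "finite (verts B)" and "\<not> strong_hom_image_le B A"
  shows "card (verts A) < card (verts B)
    \<or> card (verts A) = card (verts B) \<and> card (edges B) < card (edges A)"
proof (rule ccontr)
  assume contra: "\<not> ?thesis"
  obtain f where f: "hom f B A" and surj: "f ` verts B = verts A"
    using assms(1) by (auto simp: hom_image_le_def)
  have "card (verts A) \<le> card (verts B)"
    using surj card_image_le[OF fin, of f] by simp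
  with contra have eq: "card (verts A) = card (verts B)" and le: "card (edges A) \<le> card (edges B)"
    by auto
  have bij: "bij_betw f (verts B) (verts A)"
    using surj eq fin by (simp add: bij_betw_def eq_card_imp_inj_on)
  have "finite (verts A)"
    using surj fin by (metis finite_imageI)
  then have "strong_hom_image_le B A"
    using strong_hom_image_le_inverse[OF bij f] hom_reflects_adj_if_card_edges_le[OF f _ _ le]
      bij by (auto simp: bij_betw_def)
  with assms(3) show False by blast
qed

lemma hom_image_descent_stabilises:
  assumes fin: "\<And>i. finite (verts (g i))" and desc: "\<And>i. hom_image_le (g (Suc i)) (g i)"
  shows "\<exists>i. strong_hom_image_le (g i) (g (Suc i))"
proof (rule ccontr)
  assume "\<nexists>i. strong_hom_image_le (g i) (g (Suc i))"
  define \<mu> where "\<mu> G = (card (verts G), card (verts G) ^ 2 - card (edges G))" for G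
  let ?r = "inv_image (less_than <*lex*> less_than) \<mu>"
  have "(g (Suc i), g i) \<in> ?r" for i
  proof -
    have "card (verts (g (Suc i))) < card (verts (g i))
      \<or> card (verts (g (Suc i))) = card (verts (g i))
        \<and> card (edges (g i)) < card (edges (g (Suc i)))"
      using hom_image_le_strict_decrease[OF desc fin] \<open>\<nexists>i. _\<close> by blast
    moreover have "card (edges (g (Suc i))) \<le> card (verts (g (Suc i))) ^ 2"
      by (rule card_edges_le[OF fin])
    ultimately show ?thesis by (auto simp: \<mu>_def)
  qed
  moreover have "wf ?r"
    by (intro wf_inv_image wf_lex_prod wf_less_than)
  ultimately show False
    unfolding wf_iff_no_infinite_down_chain by blast
qed

lemma strong_hom_image_le_if_adj_iff:
  assumes reflA: "\<forall>u\<in>verts A. adj A u u" and reflB: "\<forall>x\<in>verts B. adj B x x"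
    and surj: "f ` verts B = verts A"
    and iff: "\<And>x y. x \<in> verts B \<Longrightarrow> y \<in> verts B \<Longrightarrow> f x \<noteq> f y \<Longrightarrow>
      adj A (f x) (f y) \<longleftrightarrow> adj B x y"
  shows "strong_hom_image_le A B"
proof -
  have "hom f B A"
    using surj reflA iff by (auto simp: hom_def) (metis image_eqI)
  moreover have "\<exists>x\<in>verts B. \<exists>y\<in>verts B. f x = f x' \<and> f y = f y' \<and> adj B x y"
    if "x' \<in> verts B" "y' \<in> verts B" "adj A (f x') (f y')" for x' y'
    using that reflB iff by (cases "f x' = f y'") auto
  ultimately have "strong_hom f B A"
    by (auto simp: strong_hom_def)
  with surj show ?thesis
    by (auto simp: strong_hom_image_le_def)
qed

lemma ex_label_preserving_surj:
  fixes LX :: "'x \<Rightarrow> 'l" and LY :: "'y \<Rightarrow> 'l"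
  assumes "finite X" and "finite Y" and im: "LY ` Y = LX ` X"
    and card: "\<And>l. l \<in> LX ` X \<Longrightarrow> card {y\<in>Y. LY y = l} \<le> card {x\<in>X. LX x = l}"
  shows "\<exists>f. f ` X = Y \<and> (\<forall>x\<in>X. LY (f x) = LX x)"
proof -
  have "\<exists>g. g ` {x\<in>X. LX x = l} = {y\<in>Y. LY y = l}" if l: "l \<in> LX ` X" for l
  proof -
    have "{y\<in>Y. LY y = l} \<noteq> {}"
      using l im by force
    moreover have "finite {y\<in>Y. LY y = l}" "finite {x\<in>X. LX x = l}"
      using assms(1,2) by simp_all
    then obtain h where "h ` {y\<in>Y. LY y = l} \<subseteq> {x\<in>X. LX x = l}" "inj_on h {y\<in>Y. LY y = l}"
      using card_le_inj card[OF l] by blast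
    ultimately show ?thesis
      using inj_on_iff_surj[of "{y\<in>Y. LY y = l}" "{x\<in>X. LX x = l}"] by blast
  qed
  then obtain g where g: "\<And>l. l \<in> LX ` X \<Longrightarrow> g l ` {x\<in>X. LX x = l} = {y\<in>Y. LY y = l}"
    by metis
  define f where "f x = g (LX x) x" for x
  have f: "f x \<in> Y \<and> LY (f x) = LX x" if "x \<in> X" for x
  proof -
    have "f x \<in> g (LX x) ` {x'\<in>X. LX x' = LX x}"
      using that by (simp add: f_def)
    then show ?thesis
      using g[of "LX x"] that by simp
  qed
  have "Y \<subseteq> f ` X"
  proof
    fix y assume "y \<in> Y"
    then have "LY y \<in> LX ` X" "y \<in> g (LY y) ` {x\<in>X. LX x = LY y}"
      using im g[of "LY y"] by auto
    then obtain x where "x \<in> X" "LX x = LY y" "y = g (LY y) x"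
      by blast
    then have "y = f x"
      by (simp add: f_def)
    with \<open>x \<in> X\<close> show "y \<in> f ` X"
      by blast
  qed
  with f show ?thesis
    by blast
qed

definition labelling :: "'l set \<Rightarrow> graph \<Rightarrow> (nat \<Rightarrow> 'l) \<Rightarrow> ('l \<Rightarrow> 'l \<Rightarrow> bool) \<Rightarrow> bool" where
  "labelling \<Lambda> G L R \<longleftrightarrow> L ` verts G \<subseteq> \<Lambda>
     \<and> (\<forall>x\<in>verts G. \<forall>y\<in>verts G. x \<noteq> y \<longrightarrow> (adj G x y \<longleftrightarrow> R (L x) (L y)))"

lemma strong_hom_image_le_if_labelling_dominated:
  assumes A: "finite_refl_graph A" and B: "finite_refl_graph B"
    and lA: "labelling \<Lambda> A LA RA" and lB: "labelling \<Lambda> B LB RB"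
    and R: "\<forall>a\<in>\<Lambda>. \<forall>b\<in>\<Lambda>. RA a b \<longleftrightarrow> RB a b"
    and im: "LA ` verts A = LB ` verts B"
    and card: "\<forall>l\<in>\<Lambda>. card {x\<in>verts A. LA x = l} \<le> card {x\<in>verts B. LB x = l}"
  shows "strong_hom_image_le A B"
proof -
  have LB: "LB ` verts B \<subseteq> \<Lambda>"
    using lB by (simp add: labelling_def)
  have "card {y\<in>verts A. LA y = l} \<le> card {x\<in>verts B. LB x = l}" if "l \<in> LB ` verts B" for l
    using card LB that by blast
  then obtain f where surj: "f ` verts B = verts A" and f: "\<forall>x\<in>verts B. LA (f x) = LB x"
    using ex_label_preserving_surj[OF finite_refl_graphD(1)[OF B] finite_refl_graphD(1)[OF A] im]
    by blast
  show ?thesis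
  proof (rule strong_hom_image_le_if_adj_iff[OF _ _ surj])
    fix x y assume xy: "x \<in> verts B" "y \<in> verts B" "f x \<noteq> f y"
    have "f x \<in> verts A" "f y \<in> verts A"
      using surj xy by auto
    then have "adj A (f x) (f y) \<longleftrightarrow> RA (LA (f x)) (LA (f y))"
      using lA xy(3) by (simp add: labelling_def)
    also have "\<dots> \<longleftrightarrow> RA (LB x) (LB y)"
      using f xy by simp
    also have "\<dots> \<longleftrightarrow> RB (LB x) (LB y)"
      using R LB xy by auto
    also have "\<dots> \<longleftrightarrow> adj B x y"
      using lB xy by (auto simp: labelling_def)
    finally show "adj A (f x) (f y) \<longleftrightarrow> adj B x y" .
  qed (use finite_refl_graphD(3)[OF A] finite_refl_graphD(3)[OF B] in blast)+
qed

lemma labelled_sequence_good_pair: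
  fixes g :: "nat \<Rightarrow> graph"
  assumes fin: "finite \<Lambda>" and graphs: "\<And>i. finite_refl_graph (g i)"
    and lab: "\<And>i. labelling \<Lambda> (g i) (L i) (R i)"
  shows "\<exists>i j. i < j \<and> strong_hom_image_le (g i) (g j)"
proof -
  define D where "D i = (L i ` verts (g i), {(a, b) \<in> \<Lambda> \<times> \<Lambda>. R i a b})" for i
  define c where "c i l = card {x\<in>verts (g i). L i x = l}" for i l
  have "range D \<subseteq> Pow \<Lambda> \<times> Pow (\<Lambda> \<times> \<Lambda>)"
    using lab by (auto simp: D_def labelling_def)
  then have "finite (range D)"
    using fin by (simp add: finite_subset)
  then obtain i j where "i < j" and D: "D i = D j" and counts: "\<forall>l\<in>\<Lambda>. c i l \<le> c j l"
    using dickson_good_pair[OF fin, of D c] by blast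
  have im: "L i ` verts (g i) = L j ` verts (g j)"
    using D by (simp add: D_def)
  have rel: "{(a, b) \<in> \<Lambda> \<times> \<Lambda>. R i a b} = {(a, b) \<in> \<Lambda> \<times> \<Lambda>. R j a b}"
    using D by (simp add: D_def)
  have "\<forall>a\<in>\<Lambda>. \<forall>b\<in>\<Lambda>. R i a b \<longleftrightarrow> R j a b"
  proof (intro ballI)
    fix a b assume "a \<in> \<Lambda>" "b \<in> \<Lambda>"
    moreover have "(a, b) \<in> {(a, b) \<in> \<Lambda> \<times> \<Lambda>. R i a b} \<longleftrightarrow> (a, b) \<in> {(a, b) \<in> \<Lambda> \<times> \<Lambda>. R j a b}"
      using rel by simp
    ultimately show "R i a b \<longleftrightarrow> R j a b"
      by simp
  qed
  with im counts have "strong_hom_image_le (g i) (g j)"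
    unfolding c_def by (intro strong_hom_image_le_if_labelling_dominated[OF graphs graphs lab lab])
  with \<open>i < j\<close> show ?thesis
    by blast
qed

definition T_labels :: "nat \<Rightarrow> (nat + bool \<times> nat set) set" where
  "T_labels N = Inl ` {..<N} \<union> Inr ` (UNIV \<times> Pow {..<N})"

lemma finite_T_labels: "finite (T_labels N)"
  by (simp add: T_labels_def)

locale T_decomposition =
  fixes G :: graph and Ge Gc Gf :: "nat set" and idx :: "nat \<Rightarrow> nat" and N :: nat
  assumes sym: "\<And>x y. x \<in> verts G \<Longrightarrow> y \<in> verts G \<Longrightarrow> adj G x y \<Longrightarrow> adj G y x"
    and verts_eq: "verts G = Ge \<union> Gc \<union> Gf"
    and disjoint: "Ge \<inter> Gc = {}" "Ge \<inter> Gf = {}" "Gc \<inter> Gf = {}"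
    and empty: "\<And>x y. x \<in> Ge \<Longrightarrow> y \<in> Ge \<Longrightarrow> x \<noteq> y \<Longrightarrow> \<not> adj G x y"
    and complete: "\<And>x y. x \<in> Gc \<Longrightarrow> y \<in> Gc \<Longrightarrow> x \<noteq> y \<Longrightarrow> adj G x y"
    and uniform: "\<And>x y z t. x \<in> Ge \<Longrightarrow> y \<in> Ge \<Longrightarrow> z \<in> Gc \<Longrightarrow> t \<in> Gc \<Longrightarrow>
      adj G x z \<longleftrightarrow> adj G y t"
    and inj_idx: "inj_on idx Gf" and idx_less: "idx ` Gf \<subseteq> {..<N}"
begin

definition nbhd :: "nat \<Rightarrow> nat set" where
  "nbhd x = idx ` {v\<in>Gf. adj G x v}"

definition label :: "nat \<Rightarrow> nat + bool \<times> nat set" where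
  "label x = (if x \<in> Gf then Inl (idx x) else Inr (x \<in> Gc, nbhd x))"

definition across :: bool where
  "across \<longleftrightarrow> (\<exists>x\<in>Ge. \<exists>z\<in>Gc. adj G x z)"

fun label_adj :: "nat + bool \<times> nat set \<Rightarrow> nat + bool \<times> nat set \<Rightarrow> bool" where
  "label_adj (Inl a) (Inl b) \<longleftrightarrow> (\<exists>v\<in>Gf. \<exists>w\<in>Gf. idx v = a \<and> idx w = b \<and> adj G v w)"
| "label_adj (Inl a) (Inr (_, S)) \<longleftrightarrow> a \<in> S"
| "label_adj (Inr (_, S)) (Inl b) \<longleftrightarrow> b \<in> S"
| "label_adj (Inr (c, _)) (Inr (d, _)) \<longleftrightarrow> (if c = d then c else across)"

lemma idx_in_nbhd_iff: "v \<in> Gf \<Longrightarrow> idx v \<in> nbhd x \<longleftrightarrow> adj G x v"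
  unfolding nbhd_def by (subst inj_on_image_mem_iff[OF inj_idx]) auto

lemma adj_iff_across:
  assumes "x \<in> Ge" and "z \<in> Gc"
  shows "adj G x z \<longleftrightarrow> across"
proof
  show "adj G x z \<Longrightarrow> across"
    using assms by (auto simp: across_def)
next
  assume across
  then obtain x' z' where "x' \<in> Ge" "z' \<in> Gc" "adj G x' z'"
    by (auto simp: across_def)
  then show "adj G x z"
    using uniform[of x' x z' z] assms by blast
qed

lemma adj_iff_side:
  assumes x: "x \<in> Ge \<union> Gc" and y: "y \<in> Ge \<union> Gc" and "x \<noteq> y"
  shows "adj G x y \<longleftrightarrow> (if (x \<in> Gc) = (y \<in> Gc) then x \<in> Gc else across)"
proof -
  consider "x \<in> Gc" "y \<in> Gc" | "x \<in> Ge" "y \<in> Ge" | "x \<in> Ge" "y \<in> Gc" | "x \<in> Gc" "y \<in> Ge"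
    using x y by blast
  then show ?thesis
  proof cases
    case 1
    then show ?thesis
      using complete \<open>x \<noteq> y\<close> by simp
  next
    case 2
    then have "x \<notin> Gc" "y \<notin> Gc"
      using disjoint(1) by blast+
    then show ?thesis
      using 2 empty \<open>x \<noteq> y\<close> by simp
  next
    case 3
    then have "x \<notin> Gc"
      using disjoint(1) by blast
    then show ?thesis
      using 3 adj_iff_across by simp
  next
    case 4
    then have "y \<notin> Gc" "adj G x y \<longleftrightarrow> adj G y x"
      using disjoint(1) sym verts_eq by blast+
    then show ?thesis
      using 4 adj_iff_across[of y x] by simp
  qed
qed

lemma label_in_T_labels: "label x \<in> T_labels N"
proof -
  have "nbhd x \<subseteq> {..<N}"
    using idx_less by (auto simp: nbhd_def)
  then show ?thesis
    using idx_less by (auto simp: label_def T_labels_def)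
qed

lemma adj_iff_label_adj:
  assumes x: "x \<in> verts G" and y: "y \<in> verts G" and "x \<noteq> y"
  shows "adj G x y \<longleftrightarrow> label_adj (label x) (label y)"
proof -
  have sym_xy: "adj G y x \<longleftrightarrow> adj G x y"
    using sym x y by blast
  consider "x \<in> Gf" "y \<in> Gf" | "x \<in> Gf" "y \<notin> Gf" | "x \<notin> Gf" "y \<in> Gf" | "x \<notin> Gf" "y \<notin> Gf"
    by blast
  then show ?thesis
  proof cases
    case 1
    then have "label x = Inl (idx x)" "label y = Inl (idx y)"
      by (simp_all add: label_def)
    with 1 show ?thesis
      using inj_idx by (auto simp: inj_on_eq_iff)
  next
    case 2
    then have "label x = Inl (idx x)" "label y = Inr (y \<in> Gc, nbhd y)"
      by (simp_all add: label_def)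
    with 2 show ?thesis
      by (simp add: idx_in_nbhd_iff sym_xy)
  next
    case 3
    then have "label x = Inr (x \<in> Gc, nbhd x)" "label y = Inl (idx y)"
      by (simp_all add: label_def)
    with 3 show ?thesis
      by (simp add: idx_in_nbhd_iff)
  next
    case 4
    then have "x \<in> Ge \<union> Gc" "y \<in> Ge \<union> Gc"
      using x y verts_eq by auto
    with 4 show ?thesis
      using adj_iff_side \<open>x \<noteq> y\<close> by (simp add: label_def)
  qed
qed

lemma labelling: "labelling (T_labels N) G label label_adj"
  unfolding labelling_def
  by (intro conjI image_subsetI ballI impI label_in_T_labels adj_iff_label_adj)

end

lemma T_class_labelling:
  assumes "G \<in> T_class N"
  shows "\<exists>L R. labelling (T_labels N) G L R"
proof -
  obtain Ge Gc Gf where decomp: "verts G = Ge \<union> Gc \<union> Gf"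
      "Ge \<inter> Gc = {}" "Ge \<inter> Gf = {}" "Gc \<inter> Gf = {}"
      "\<forall>x\<in>Ge. \<forall>y\<in>Ge. x \<noteq> y \<longrightarrow> \<not> adj G x y"
      "\<forall>x\<in>Gc. \<forall>y\<in>Gc. x \<noteq> y \<longrightarrow> adj G x y"
      "card Gf \<le> N"
      "\<forall>x\<in>Ge. \<forall>y\<in>Ge. \<forall>z\<in>Gc. \<forall>t\<in>Gc. adj G x z \<longleftrightarrow> adj G y t"
    using assms unfolding T_class_def mem_Collect_eq by (elim conjE exE)
  have graph: "finite_refl_graph G"
    using assms by (simp add: T_class_def)
  have "finite Gf"
    using finite_refl_graphD(1)[OF graph] decomp(1) by simp
  then obtain idx where idx: "idx ` Gf \<subseteq> {..<N}" "inj_on idx Gf"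
    using card_le_inj[of Gf "{..<N}"] decomp(7) by auto
  interpret T_decomposition G Ge Gc Gf idx N
  proof unfold_locales
    fix x y assume "x \<in> verts G" "y \<in> verts G" "adj G x y"
    then show "adj G y x"
      by (rule finite_refl_graphD(2)[OF graph])
  next
    fix x y z t assume "x \<in> Ge" "y \<in> Ge" "z \<in> Gc" "t \<in> Gc"
    then show "adj G x z \<longleftrightarrow> adj G y t"
      using decomp(8) by blast
  qed (use decomp(1-6) idx in auto)
  show ?thesis
    using labelling by blast
qed

lemma T_class_good_pair:
  fixes g :: "nat \<Rightarrow> graph"
  assumes "\<And>i. g i \<in> T_class N"
  shows "\<exists>i j. i < j \<and> strong_hom_image_le (g i) (g j)"
proof -
  obtain L R where "\<And>i. labelling (T_labels N) (g i) (L i) (R i)"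
    using T_class_labelling[OF assms] by metis
  moreover have "\<And>i. finite_refl_graph (g i)"
    using assms by (simp add: T_class_def)
  ultimately show ?thesis
    using labelled_sequence_good_pair[OF finite_T_labels] by blast
qed

lemma T_class_well_quasi_ordered:
  assumes strong_le: "\<And>A B. strong_hom_image_le A B \<Longrightarrow> le A B"
    and le_hom: "\<And>A B. le A B \<Longrightarrow> hom_image_le A B"
  shows "well_quasi_ordered_on le (T_class N)"
  unfolding well_quasi_ordered_on_def
proof (intro conjI notI; elim exE conjE)
  fix g :: "nat \<Rightarrow> graph"
  assume T: "\<forall>i. g i \<in> T_class N"
    and desc: "\<forall>i. le (g (Suc i)) (g i) \<and> \<not> le (g i) (g (Suc i))"
  have "finite_refl_graph (g i)" for i
    using T unfolding T_class_def by blast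
  then have fin: "finite (verts (g i))" for i
    by (rule finite_refl_graphD(1))
  have hom: "hom_image_le (g (Suc i)) (g i)" for i
    using desc by (intro le_hom) blast
  obtain i where "strong_hom_image_le (g i) (g (Suc i))"
    using hom_image_descent_stabilises[of g, OF fin hom] by blast
  then have "le (g i) (g (Suc i))"
    by (rule strong_le)
  with desc show False
    by blast
next
  fix g :: "nat \<Rightarrow> graph"
  assume T: "\<forall>i. g i \<in> T_class N" and antichain: "\<forall>i j. i \<noteq> j \<longrightarrow> \<not> le (g i) (g j)"
  obtain i j where "i < j" "strong_hom_image_le (g i) (g j)"
    using T_class_good_pair[of g N] T by blast
  then have "i \<noteq> j" "le (g i) (g j)"
    by (simp_all add: strong_le)
  with antichain show False
    by blast
qed

theorem theorem2p8:
  fixes N :: nat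
  shows "well_quasi_ordered_on hom_image_le (T_class N) \<and> well_quasi_ordered_on strong_hom_image_le (T_class N)"
  by (intro conjI T_class_well_quasi_ordered) (simp_all add: strong_hom_image_le_imp_hom_image_le)

end
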